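(* Let $\kappa$ be a regular infinite cardinal and let $\langle W^\kappa,(T_i)_{i\in\{a,b\}},\theta\rangle$ be the $*$-type space described in the context. Let $\alpha\le\kappa$ and $w^\kappa,u^\kappa\in W^\kappa$ with $w^\kappa\upharpoonright\alpha=u^\kappa\upharpoonright\alpha$. Then for every $\kappa$-expression $\varphi$ with $\mathrm{dp}(\varphi)\le\alpha$: $w^\kappa\in\varphi^{W^\kappa}$ iff $u^\kappa\in\varphi^{W^\kappa}$.
   Context: Records: for $\alpha\ge1$, a record of length $\alpha$ is $r=(r(\beta))_{\beta<\alpha}\in\{0,1\}^\alpha$ such that for every limit $\lambda\le\alpha$ there is $\gamma<\lambda$ with $r(\beta)=0$ for $\gamma\le\beta<\lambda$. Parity: finite ordinals usual (0 even); infinite $\hat\lambda+n$ ($\hat\lambda$ limit) has the parity of $n$. For limit $\lambda\le\alpha$, $o^\lambda(r)$ is the least ordinal $<\lambda$ after which $r$ is $0$ below $\lambda$; $\lambda\text{-par}(r)$ is its parity. $W^0=\{h,t\}$, $W^\alpha$ ($\alpha\ge1$) = triples $(w_0,w_a^\alpha,w_b^\alpha)$ with $w_0\in\{h,t\}$, $w_a^\alpha,w_b^\alpha$ records of length $\alpha$; $w^\alpha\upharpoonright\beta$ restricts both records to $\beta$ (and $w^\alpha\upharpoonright 0=w_0$); $\pi_{\beta,\alpha}(w^\alpha)=w^\alpha\upharpoonright\beta$. For $i\in\{a,b\}$, $j$ the other player, $P_i(w^\alpha)$ is the set of $v^\alpha\in W^\alpha$ with $v_i^\alpha=w_i^\alpha$;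 $w_i^\alpha(0)=1\Rightarrow v_0=w_0$; $w_i^\alpha(\beta+1)=1\Rightarrow v_j^\alpha(\beta)=w_j^\alpha(\beta)$ for $\beta+1<\alpha$; $w_i^\alpha(\lambda)=1\Rightarrow\lambda\text{-par}(v_j^\alpha)=\lambda\text{-par}(w_j^\alpha)$ for limit $\lambda<\alpha$. $T_a,T_b:W^\kappa\to\{$finitely additive probability measures on $\mathrm{Pow}(W^\kappa)\}$ are functions (which exist) satisfying for all $w^\kappa$: (a) $T_i$ constant on $P_i(w^\kappa)$; (b) $T_i(w^\kappa)(P_i(w^\kappa))=1$; (c) $T_i(w^\kappa)(\{u:u_0=w_0\})=1$ if $w_i^\kappa(0)=1$, $=\frac12$ otherwise; (d) for $\beta<\kappa$, $T_i(w^\kappa)(\{u:u_j^\kappa(\beta)=w_j^\kappa(\beta)\})=1$ if $w_i^\kappa(\beta+1)=1$, $=\frac12$ otherwise; (e) for limit $\lambda<\kappa$, $T_i(w^\kappa)(\{u:\lambda\text{-par}(u_j^\kappa)=\lambda\text{-par}(w_j^\kappa)\})=1$ if $w_i^\kappa(\lambda)=1$, $=\frac12$ otherwise; (f) for $0\le\beta<\alpha<\kappa$, $E^\beta\subseteq W^\beta$, $u^\kappa\upharpoonright\alpha=w^\kappa\upharpoonright\alpha$ implies $T_i(u^\kappa)(\pi^{-1}_{\beta,\kappa}(E^\beta))=T_i(w^\kappa)(\pi^{-1}_{\beta,\kappa}(E^\beta))$. $\theta(w^\kappa)=w_0$. This is a $*$-type space on $S=\{h,t\}$ for players $\{a,b\}$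 (all subsets measurable). $\kappa$-expressions over $\Sigma_S=\mathrm{Pow}(\{h,t\})$, $I=\{a,b\}$: least set containing each $E\subseteq\{h,t\}$ and closed under $\neg$, $B_i^p$ ($p\in[0,1]$), and conjunctions of fewer than $\kappa$ (nonempty) expressions. Semantics: $E^{W^\kappa}=\theta^{-1}(E)$, complement, $(B_i^p\varphi)^{W^\kappa}=\{w:T_i(w)(\varphi^{W^\kappa})\ge p\}$, intersection. Depth: $\mathrm{dp}(E)=0$, $\mathrm{dp}(\neg\varphi)=\mathrm{dp}(\varphi)$, $\mathrm{dp}(B_i^p\varphi)=\mathrm{dp}(\varphi)+1$, $\mathrm{dp}(\bigwedge_{\varphi\in\Psi}\varphi)=\sup_{\varphi\in\Psi}\mathrm{dp}(\varphi)$. *)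

theory Defs
  imports Complex_Main
begin

text \<open>The ordinals below kappa are the elements of a well-ordered type 'k whose
  order relation is an (initial-ordinal) cardinal order; kappa itself is the
  order type of 'k. Ordinals alpha \<le> kappa are encoded as 'k option, with None = kappa.\<close>

definition ordrel :: "('k::wellorder) rel" where
  "ordrel = {(x, y). x \<le> y}"

definition ozero :: "'k::wellorder" where
  "ozero = (LEAST x. True)"

definition osucc :: "'k::wellorder \<Rightarrow> 'k" where
  "osucc b = (LEAST g. b < g)"

definition is_limit :: "'k::wellorder \<Rightarrow> bool" where
  "is_limit l \<longleftrightarrow> l \<noteq> ozero \<and> (\<forall>b<l. \<exists>g. b < g \<and> g < l)"

definition olt :: "'k::wellorder \<Rightarrow> 'k option \<Rightarrow> bool" where
  "olt b a = (case a of None \<Rightarrow> True | Some a' \<Rightarrow> b < a')"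

definition ole :: "'k::wellorder option \<Rightarrow> 'k option \<Rightarrow> bool" where
  "ole x y = (case y of None \<Rightarrow> True
              | Some y' \<Rightarrow> (case x of None \<Rightarrow> False | Some x' \<Rightarrow> x' \<le> y'))"

definition osucc_opt :: "'k::wellorder option \<Rightarrow> 'k option" where
  "osucc_opt x = (case x of None \<Rightarrow> None | Some b \<Rightarrow> Some (osucc b))"

definition osup :: "'k::wellorder option set \<Rightarrow> 'k option" where
  "osup S = (if None \<in> S \<or> \<not> (\<exists>g. \<forall>s\<in>S. ole s (Some g)) then None
             else Some (LEAST g. \<forall>s\<in>S. ole s (Some g)))"

inductive plus_n :: "'k::wellorder \<Rightarrow> nat \<Rightarrow> 'k \<Rightarrow> bool" where
  "plus_n l 0 l"
| "plus_n l n b \<Longrightarrow> plus_n l (Suc n) (osucc b)"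

definition ord_even :: "'k::wellorder \<Rightarrow> bool" where
  "ord_even b \<longleftrightarrow> (\<exists>l n. (l = ozero \<or> is_limit l) \<and> plus_n l n b \<and> even n)"

text \<open>A record of length alpha (alpha \<le> kappa) is a function 'k \<Rightarrow> bool (True = 1) that
  vanishes at positions \<ge> alpha, such that for every limit lambda \<le> alpha it is
  eventually 0 below lambda.\<close>
definition eventually_zero_below :: "('k::wellorder \<Rightarrow> bool) \<Rightarrow> 'k option \<Rightarrow> bool" where
  "eventually_zero_below r l \<longleftrightarrow> (\<exists>g. olt g l \<and> (\<forall>b. g \<le> b \<and> olt b l \<longrightarrow> \<not> r b))"

definition is_record :: "'k::wellorder option \<Rightarrow> ('k \<Rightarrow> bool) \<Rightarrow> bool" where
  "is_record a r \<longleftrightarrow> ole (Some ozero) a \<and> a \<noteq> Some ozero \<and>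
     (\<forall>b. \<not> olt b a \<longrightarrow> \<not> r b) \<and>
     (\<forall>l. is_limit l \<and> ole (Some l) a \<longrightarrow> eventually_zero_below r (Some l)) \<and>
     (a = None \<longrightarrow> eventually_zero_below r None)"

definition o_lam :: "'k::wellorder \<Rightarrow> ('k \<Rightarrow> bool) \<Rightarrow> 'k" where
  "o_lam l r = (LEAST g. g < l \<and> (\<forall>b. g \<le> b \<and> b < l \<longrightarrow> \<not> r b))"

definition lam_par :: "'k::wellorder \<Rightarrow> ('k \<Rightarrow> bool) \<Rightarrow> bool" where
  "lam_par l r = ord_even (o_lam l r)"

datatype coin = H | T
datatype player = A | B

fun other :: "player \<Rightarrow> player" where
  "other A = B" | "other B = A"

type_synonym 'k world = "coin \<times> (player \<Rightarrow> 'k \<Rightarrow> bool)"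

definition W :: "'k::wellorder world set" where
  "W = {(c, f). \<forall>i. is_record None (f i)}"

text \<open>Restriction w|alpha; for alpha = 0 only the coin survives (records become all-0).\<close>
definition restr :: "'k::wellorder option \<Rightarrow> 'k world \<Rightarrow> 'k world" where
  "restr a w = (fst w, \<lambda>i b. olt b a \<and> snd w i b)"

text \<open>W^beta for beta < kappa (W^0 is represented by pairs (c, all-zero)).\<close>
definition W_lvl :: "'k::wellorder \<Rightarrow> 'k world set" where
  "W_lvl b = (if b = ozero then {(c, f). \<forall>i x. \<not> f i x}
              else {(c, f). \<forall>i. is_record (Some b) (f i)})"

definition preimg :: "'k::wellorder \<Rightarrow> 'k world set \<Rightarrow> 'k world set" where
  "preimg b E = {v \<in> W. restr (Some b) v \<in> E}"

definition P :: "player \<Rightarrow> 'k::wellorder world \<Rightarrow> 'k world set" where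
  "P i w = {v \<in> W. snd v i = snd w i
     \<and> (snd w i ozero \<longrightarrow> fst v = fst w)
     \<and> (\<forall>b. snd w i (osucc b) \<longrightarrow> snd v (other i) b = snd w (other i) b)
     \<and> (\<forall>l. is_limit l \<and> snd w i l \<longrightarrow>
            lam_par l (snd v (other i)) = lam_par l (snd w (other i)))}"

definition fa_prob :: "'a set \<Rightarrow> ('a set \<Rightarrow> real) \<Rightarrow> bool" where
  "fa_prob X \<mu> \<longleftrightarrow> \<mu> X = 1 \<and> (\<forall>E\<subseteq>X. 0 \<le> \<mu> E)
     \<and> (\<forall>E F. E \<subseteq> X \<and> F \<subseteq> X \<and> E \<inter> F = {} \<longrightarrow> \<mu> (E \<union> F) = \<mu> E + \<mu> F)"

definition type_space :: "(player \<Rightarrow> 'k::wellorder world \<Rightarrow> 'k world set \<Rightarrow> real) \<Rightarrow> bool" where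
  "type_space Tp \<longleftrightarrow> (\<forall>i. \<forall>w\<in>W.
      fa_prob W (Tp i w)
    \<and> (\<forall>v\<in>P i w. Tp i v = Tp i w)
    \<and> Tp i w (P i w) = 1
    \<and> Tp i w {u\<in>W. fst u = fst w} = (if snd w i ozero then 1 else 1/2)
    \<and> (\<forall>b. Tp i w {u\<in>W. snd u (other i) b = snd w (other i) b}
            = (if snd w i (osucc b) then 1 else 1/2))
    \<and> (\<forall>l. is_limit l \<longrightarrow>
          Tp i w {u\<in>W. lam_par l (snd u (other i)) = lam_par l (snd w (other i))}
            = (if snd w i l then 1 else 1/2))
    \<and> (\<forall>b a E u. b < a \<and> E \<subseteq> W_lvl b \<and> u \<in> W \<and> restr (Some a) u = restr (Some a) w
          \<longrightarrow> Tp i u (preimg b E) = Tp i w (preimg b E)))"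

datatype 'k expr = Atom "coin set" | Neg "'k expr" | Bel player real "'k expr"
  | Conj "'k set" "'k \<Rightarrow> 'k expr"

primrec wf_expr :: "('k::wellorder) expr \<Rightarrow> bool" where
  "wf_expr (Atom E) = True"
| "wf_expr (Neg x) = wf_expr x"
| "wf_expr (Bel i p x) = (0 \<le> p \<and> p \<le> 1 \<and> wf_expr x)"
| "wf_expr (Conj J f) = (J \<noteq> {} \<and> (card_of J, card_of (UNIV :: 'k set)) \<in> ordLess \<and> (\<forall>j\<in>J. wf_expr (f j)))"

primrec sem :: "(player \<Rightarrow> 'k::wellorder world \<Rightarrow> 'k world set \<Rightarrow> real) \<Rightarrow> 'k expr \<Rightarrow> 'k world set" where
  "sem Tp (Atom E) = {w \<in> W. fst w \<in> E}"
| "sem Tp (Neg x) = W - sem Tp x"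
| "sem Tp (Bel i p x) = {w \<in> W. Tp i w (sem Tp x) \<ge> p}"
| "sem Tp (Conj J f) = W \<inter> (\<Inter>j\<in>J. sem Tp (f j))"

primrec dp :: "('k::wellorder) expr \<Rightarrow> 'k option" where
  "dp (Atom E) = Some ozero"
| "dp (Neg x) = dp x"
| "dp (Bel i p x) = osucc_opt (dp x)"
| "dp (Conj J f) = osup ((\<lambda>j. dp (f j)) ` J)"

end

theory Submission
  imports Defs
begin

text \<open>Restriction to \<open>\<kappa>\<close> is the identity, so only
  \<open>\<alpha> < \<kappa>\<close> matters. The only non-trivial case is \<open>B\<^sub>i\<^sup>p \<psi>\<close> with \<open>\<beta> = dp \<psi>\<close> and
  \<open>\<beta> + 1 \<le> \<alpha>\<close>: by induction the extension of \<open>\<psi>\<close> depends only on the restriction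
  to \<open>\<beta>\<close>, i.e. it is the preimage under \<open>\<pi>\<^sub>\<beta>\<^sub>,\<^sub>\<kappa>\<close> of a subset of \<open>W\<^sup>\<beta>\<close>, and condition (f)
  says that types agreeing up to \<open>\<alpha> > \<beta>\<close> give such preimages the same probability.\<close>

lemma ozero_le: "ozero \<le> (x::'k::wellorder)"
  unfolding ozero_def by (rule Least_le) simp

lemma ex_greater:
  assumes "Cinfinite (ordrel :: 'k::wellorder rel)"
  shows "\<exists>y. (x::'k) < y"
proof -
  have "Field (ordrel :: 'k rel) = UNIV"
    unfolding ordrel_def Field_def by auto
  then have "\<exists>y \<in> Field (ordrel :: 'k rel). x \<noteq> y \<and> (x, y) \<in> ordrel"
    using assms by (intro infinite_Card_order_limit) (auto simp: cinfinite_def)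
  then show ?thesis
    unfolding ordrel_def using le_neq_trans by blast
qed

lemma less_osucc:
  assumes "Cinfinite (ordrel :: 'k::wellorder rel)"
  shows "(x::'k) < osucc x"
  unfolding osucc_def using ex_greater[OF assms, of x] by (metis LeastI)

lemma ole_osup_imp_ole:
  assumes "ole (osup S) (Some a)" and "s \<in> S"
  shows "ole s (Some a)"
proof (cases "None \<in> S \<or> \<not> (\<exists>g. \<forall>s\<in>S. ole s (Some g))")
  case True
  then show ?thesis
    using assms(1) by (simp add: osup_def ole_def)
next
  case False
  define g where "g = (LEAST g. \<forall>s\<in>S. ole s (Some g))"
  have "\<forall>s\<in>S. ole s (Some g)"
    unfolding g_def by (rule LeastI_ex) (use False in blast)
  moreover have "osup S = Some g"
    using False by (simp add: osup_def g_def)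
  then have "g \<le> a"
    using assms(1) by (simp add: ole_def)
  ultimately show ?thesis
    using assms(2) unfolding ole_def by (cases s) auto
qed

lemma restr_None: "restr None w = w"
  unfolding restr_def olt_def by simp

lemma restr_in_W_lvl:
  assumes "v \<in> W"
  shows "restr (Some b) v \<in> W_lvl b"
proof (cases "b = ozero")
  case True
  then have "\<not> x < b" for x
    using ozero_le[of x] by simp
  then show ?thesis
    using True unfolding W_lvl_def restr_def olt_def by simp
next
  case False
  obtain c f where v: "v = (c, f)" by fastforce
  have "is_record (Some b) (\<lambda>x. x < b \<and> f i x)" for i
  proof -
    have "is_record None (f i)"
      using assms v unfolding W_def by auto
    then have "eventually_zero_below (f i) (Some l)" if "is_limit l" for l
      using that unfolding is_record_def ole_def by simp
    then have "eventually_zero_below (\<lambda>x. x < b \<and> f i x) (Some l)" if "is_limit l" for l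
      using that unfolding eventually_zero_below_def by blast
    then show ?thesis
      using False ozero_le[of b] unfolding is_record_def by (simp add: ole_def olt_def)
  qed
  then show ?thesis
    using False unfolding W_lvl_def restr_def olt_def v by simp
qed

lemma eq_preimg_restr_image:
  assumes "S \<subseteq> W"
    and "\<And>y z. y \<in> W \<Longrightarrow> z \<in> S \<Longrightarrow> restr (Some b) y = restr (Some b) z \<Longrightarrow> y \<in> S"
  shows "S = preimg b (restr (Some b) ` S)"
  using assms unfolding preimg_def by (auto simp: image_iff)

lemma type_space_preimg_cong:
  assumes "type_space Tp" and "w \<in> W" and "u \<in> W"
    and "b < a" and "E \<subseteq> W_lvl b" and "restr (Some a) u = restr (Some a) w"
  shows "Tp i u (preimg b E) = Tp i w (preimg b E)"
  using assms unfolding type_space_def by blast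

lemma sem_subset_W: "sem Tp \<phi> \<subseteq> W"
  by (induction \<phi>) auto

lemma sem_restr_cong:
  assumes "Cinfinite (ordrel :: 'k::wellorder rel)" and "type_space Tp"
  shows "ole (dp \<phi>) (Some a) \<Longrightarrow> v \<in> W \<Longrightarrow> v' \<in> W \<Longrightarrow>
    restr (Some a) v = restr (Some a) v' \<Longrightarrow> v \<in> sem Tp (\<phi>::'k expr) \<longleftrightarrow> v' \<in> sem Tp \<phi>"
proof (induction \<phi> arbitrary: a v v')
  case (Atom E)
  have "fst v = fst v'"
    using arg_cong[OF Atom.prems(4), of fst] by (simp add: restr_def)
  then show ?case
    using Atom.prems by simp
next
  case (Neg \<psi>)
  show ?case
    using Neg.IH[OF Neg.prems(1)[unfolded dp.simps] Neg.prems(2-4)] Neg.prems(2,3) by simp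
next
  case (Bel i p \<psi>)
  obtain \<beta> where dp\<psi>: "dp \<psi> = Some \<beta>" and "osucc \<beta> \<le> a"
    using Bel.prems(1) by (cases "dp \<psi>") (simp_all add: osucc_opt_def ole_def)
  then have "\<beta> < a"
    using less_osucc[OF assms(1), of \<beta>] by simp
  define E where "E = restr (Some \<beta>) ` sem Tp \<psi>"
  have "E \<subseteq> W_lvl \<beta>"
    unfolding E_def using sem_subset_W restr_in_W_lvl by blast
  have "sem Tp \<psi> = preimg \<beta> E"
    unfolding E_def
  proof (rule eq_preimg_restr_image[OF sem_subset_W])
    fix y z
    assume "y \<in> W" "z \<in> sem Tp \<psi>" "restr (Some \<beta>) y = restr (Some \<beta>) z"
    then show "y \<in> sem Tp \<psi>"
      using Bel.IH[of \<beta> y z] dp\<psi> sem_subset_W by (auto simp: ole_def)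
  qed
  moreover have "Tp i v' (preimg \<beta> E) = Tp i v (preimg \<beta> E)"
    using type_space_preimg_cong[OF assms(2) Bel.prems(2,3) \<open>\<beta> < a\<close> \<open>E \<subseteq> W_lvl \<beta>\<close>]
      Bel.prems(4) by simp
  ultimately show ?case
    using Bel.prems(2,3) by simp
next
  case (Conj J f)
  have "v \<in> sem Tp (f j) \<longleftrightarrow> v' \<in> sem Tp (f j)" if "j \<in> J" for j
    using Conj.IH[OF rangeI _ Conj.prems(2-4)]
      ole_osup_imp_ole[OF Conj.prems(1)[unfolded dp.simps] imageI[OF that]] .
  then show ?case
    using Conj.prems(2,3) by auto
qed

theorem lemma7:
  fixes Tp :: "player \<Rightarrow> ('k::wellorder) world \<Rightarrow> 'k world set \<Rightarrow> real"
    and a :: "'k option" and w u :: "'k world" and \<phi> :: "'k expr"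
  assumes "card_order (ordrel :: 'k rel)" and "Cinfinite (ordrel :: 'k rel)"
    and "regularCard (ordrel :: 'k rel)"
    and "type_space Tp"
    and "w \<in> W" and "u \<in> W" and "restr a w = restr a u"
    and "wf_expr \<phi>" and "ole (dp \<phi>) a"
  shows "w \<in> sem Tp \<phi> \<longleftrightarrow> u \<in> sem Tp \<phi>"
proof (cases a)
  case None
  then show ?thesis
    using assms(7) by (simp add: restr_None)
next
  case (Some a')
  then show ?thesis
    using sem_restr_cong[OF assms(2,4)] assms(5-7,9) by blast
qed

end
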